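(* Let $Y_1$ and $Y_2$ be bordered 3-manifolds with torus boundary (with bounded modules so the pairing theorem applies). Suppose $\widehat{CFD}(Y_1)$ has two durable generators $\mathbf x_1$ and $\mathbf y_1=D_{123}(\mathbf x_1)$, and $\widehat{CFD}(Y_2)$ has two weakly durable generators $\mathbf x_2$ and $\mathbf y_2=D_{123}(\mathbf x_2)$. Then the closed manifold $Y_1\cup Y_2$, whose Floer complex is $\widehat{CFA}(Y_1)\boxtimes\widehat{CFD}(Y_2)$, is not an $L$-space.
   Context: Notation as follows (over $\mathbb F=\mathbb Z/2$). Torus algebra $\mathcal A$: idempotents $\iota_0,\iota_1$ and Reeb elements $\rho_1=\iota_0\rho_1\iota_1$, $\rho_2=\iota_1\rho_2\iota_0$, $\rho_3=\iota_0\rho_3\iota_1$, $\rho_{12}=\iota_0\rho_{12}\iota_0$, $\rho_{23}=\iota_1\rho_{23}\iota_1$, $\rho_{123}=\iota_0\rho_{123}\iota_1$, nonzero products only $\rho_1\rho_2=\rho_{12},\rho_2\rho_3=\rho_{23},\rho_1\rho_{23}=\rho_{12}\rho_3=\rho_{123}$. For a type D structure $N$, coefficient maps $D_I$ are defined by $\delta_1(v)=\sum_I\rho_I\otimes D_I(v)$, $I\in\{\emptyset,1,2,3,12,23,123\}$; $\pi_{\mathbf x}$ is projection onto a basis generator $\mathbf x$. $\widehat{CFA}(Y_1)$ is the type A module obtained from $\widehat{CFD}(Y_1)$ by the standard algorithm, with generators in bijection. $Y$ is an $L$-space if it is a rational homology sphere with $\operatorname{rk}\widehat{HF}(Y)=|H_1(Y)|$;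 equivalently all of $\widehat{HF}(Y)$ lies in one relative $\mathbb Z/2$ grading. The relative $\mathbb Z/2$ gradings satisfy $gr(\rho_1)=gr(\rho_3)=0$, $gr(\rho_2)=gr(\rho_{12})=gr(\rho_{23})=gr(\rho_{123})=1$, the $\widehat{CFA}$ grading is obtained from the $\widehat{CFD}$ grading by flipping the grading of generators in idempotent $\iota_0$, and $gr(\mathbf x\otimes\mathbf y)=gr(\mathbf x)+gr(\mathbf y)$. Durable (type D): $\mathbf x\in\iota_0N$ is durable if $\pi_{\mathbf x}\circ D_I=0$ for all $I$, and whenever $D_{I_r}\circ\cdots\circ D_{I_1}(\mathbf x)\ne0$ (nonempty $I_j$): $I_1\in\{3,123\}$; if $I_1=123$, $r>1$ then $I_2=23$; if $I_1=3$, $r>1$ then $I_2\in\{23,2\}$; if $I_2=2$, $r>2$ then $I_3=123$. $\mathbf x\in\iota_1N$ is durable if whenever $\pi_{\mathbf x}\circ D_{I_r}\circ\cdots\circ D_{I_1}\ne0$ then $r=1$ and $I_1\in\{1,123\}$, and whenever $D_{I_r}\circ\cdots\circ D_{I_1}(\mathbf x)\ne0$ then $I_1=23$. Weakly durable (type D): $\mathbf x\in\iota_0N$ with $D_1(\mathbf x)=D_{12}(\mathbf x)=D_2D_{123}(\mathbf x)=D_1D_2D_3(\mathbf x)=D_{12}D_2D_3(\mathbf x)=0$; $\mathbf x\in\iota_1N$ with $D_2(\mathbf x)=0$, $\pi_{\mathbf x}\circ D_3=0$ and $\pi_{\mathbf x}\circ D_1D_2D_3=0$. *)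

theory Defs
  imports Main
begin

datatype idem = I0 | I1

text \<open>Nonempty Reeb elements; the empty index (idempotent) is encoded by None.\<close>
datatype chord = R1 | R2 | R3 | R12 | R23 | R123

fun chord_start :: "chord \<Rightarrow> idem" where
  "chord_start R1 = I0" | "chord_start R2 = I1" | "chord_start R3 = I0"
| "chord_start R12 = I0" | "chord_start R23 = I1" | "chord_start R123 = I0"

fun chord_end :: "chord \<Rightarrow> idem" where
  "chord_end R1 = I1" | "chord_end R2 = I0" | "chord_end R3 = I1"
| "chord_end R12 = I0" | "chord_end R23 = I1" | "chord_end R123 = I1"

text \<open>Relative Z/2 grading of algebra elements (True = odd); idempotents are even.\<close>
fun gr_alg :: "chord option \<Rightarrow> bool" where
  "gr_alg None = False"
| "gr_alg (Some R1) = False" | "gr_alg (Some R3) = False"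
| "gr_alg (Some R2) = True" | "gr_alg (Some R12) = True"
| "gr_alg (Some R23) = True" | "gr_alg (Some R123) = True"

fun chord_mult :: "chord \<Rightarrow> chord \<Rightarrow> chord option" where
  "chord_mult R1 R2 = Some R12"
| "chord_mult R2 R3 = Some R23"
| "chord_mult R1 R23 = Some R123"
| "chord_mult R12 R3 = Some R123"
| "chord_mult _ _ = None"

text \<open>\<open>alg_prod I J K\<close>: the product rho_I rho_J equals rho_K (None = idempotent).\<close>
fun alg_prod :: "chord option \<Rightarrow> chord option \<Rightarrow> chord option \<Rightarrow> bool" where
  "alg_prod None J K = (J = K)"
| "alg_prod (Some a) None K = (K = Some a)"
| "alg_prod (Some a) (Some b) K = (K \<noteq> None \<and> chord_mult a b = K)"

text \<open>A type D structure on the F_2-vector space with basis the (finite) type \<open>'g\<close>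
  is given by the idempotent of each generator and the matrices of the coefficient maps:
  \<open>D I x y\<close> is the coefficient of the generator \<open>y\<close> in \<open>D_I(x)\<close>, where \<open>I = None\<close> is the
  empty index. Thus \<open>delta_1(x) = sum_I rho_I \<otimes> D_I(x)\<close>.\<close>

type_synonym 'g coeff = "chord option \<Rightarrow> 'g \<Rightarrow> 'g \<Rightarrow> bool"

text \<open>Composite \<open>D_{I_r} \<circ> ... \<circ> D_{I_1}\<close> for the list \<open>[I_1,...,I_r]\<close> (matrix over F_2).\<close>
fun comp :: "'g coeff \<Rightarrow> chord list \<Rightarrow> 'g \<Rightarrow> 'g \<Rightarrow> bool" where
  "comp D [] x z = (x = z)"
| "comp D (I # Is) x z = odd (card {u. D (Some I) x u \<and> comp D Is u z})"

definition typeD :: "('g::finite \<Rightarrow> idem) \<Rightarrow> 'g coeff \<Rightarrow> bool" where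
  "typeD idm D \<longleftrightarrow>
     (\<forall>I x y. D (Some I) x y \<longrightarrow> idm x = chord_start I \<and> idm y = chord_end I)
   \<and> (\<forall>x y. D None x y \<longrightarrow> idm x = idm y)
   \<and> (\<forall>K x z. even (card {(I, J, w). alg_prod I J K \<and> D I x w \<and> D J w z}))"

text \<open>Grading convention: if \<open>rho_I \<otimes> y\<close> occurs in \<open>delta_1(x)\<close> then
  \<open>gr(x) = gr(rho_I) + gr(y) + 1\<close> (delta_1 has odd degree).\<close>
definition graded :: "'g coeff \<Rightarrow> ('g \<Rightarrow> bool) \<Rightarrow> bool" where
  "graded D gr \<longleftrightarrow> (\<forall>I x y. D I x y \<longrightarrow> gr y = (gr x \<noteq> (\<not> gr_alg I)))"

definition reduced :: "'g coeff \<Rightarrow> bool" where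
  "reduced D \<longleftrightarrow> (\<forall>x y. \<not> D None x y)"

definition boundedD :: "'g coeff \<Rightarrow> bool" where
  "boundedD D \<longleftrightarrow> (\<exists>L. \<forall>Is x z. length Is \<ge> L \<longrightarrow> \<not> comp D Is x z)"

definition durable :: "('g \<Rightarrow> idem) \<Rightarrow> 'g coeff \<Rightarrow> 'g \<Rightarrow> bool" where
  "durable idm D x \<longleftrightarrow>
    (if idm x = I0 then
       (\<forall>I w. \<not> D I w x)
     \<and> (\<forall>Is. (\<exists>z. comp D Is x z) \<and> Is \<noteq> [] \<longrightarrow>
           Is ! 0 \<in> {R3, R123}
         \<and> (Is ! 0 = R123 \<and> length Is > 1 \<longrightarrow> Is ! 1 = R23)
         \<and> (Is ! 0 = R3 \<and> length Is > 1 \<longrightarrow> Is ! 1 \<in> {R23, R2})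
         \<and> (Is ! 1 = R2 \<and> length Is > 2 \<longrightarrow> Is ! 2 = R123))
     else
       (\<forall>Is. (\<exists>w. comp D Is w x) \<and> Is \<noteq> [] \<longrightarrow> length Is = 1 \<and> Is ! 0 \<in> {R1, R123})
     \<and> (\<forall>Is. (\<exists>z. comp D Is x z) \<and> Is \<noteq> [] \<longrightarrow> Is ! 0 = R23))"

definition weakly_durable :: "('g \<Rightarrow> idem) \<Rightarrow> 'g coeff \<Rightarrow> 'g \<Rightarrow> bool" where
  "weakly_durable idm D x \<longleftrightarrow>
    (if idm x = I0 then
       (\<forall>z. \<not> comp D [R1] x z) \<and> (\<forall>z. \<not> comp D [R12] x z)
     \<and> (\<forall>z. \<not> comp D [R123, R2] x z)
     \<and> (\<forall>z. \<not> comp D [R3, R2, R1] x z)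
     \<and> (\<forall>z. \<not> comp D [R3, R2, R12] x z)
     else
       (\<forall>z. \<not> comp D [R2] x z)
     \<and> (\<forall>w. \<not> comp D [R3] w x)
     \<and> (\<forall>w. \<not> comp D [R3, R2, R1] w x))"

text \<open>Each coefficient map \<open>D_I\<close> contributes the word obtained from \<open>I\<close> by the relabelling
  1<->3 (so D_1, D_2, D_3, D_12, D_23, D_123 give the input sequences (rho_3), (rho_2), (rho_1),
  (rho_3,rho_2), (rho_2,rho_1), (rho_3,rho_2,rho_1)); along a chain of coefficient maps these
  sequences are concatenated, and at each junction the last chord and the next digit are
  merged into a single Reeb chord whenever they form one.\<close>

fun chord_word :: "chord \<Rightarrow> nat list" where
  "chord_word R1 = [3]" | "chord_word R2 = [2]" | "chord_word R3 = [1]"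
| "chord_word R12 = [3, 2]" | "chord_word R23 = [2, 1]" | "chord_word R123 = [3, 2, 1]"

fun digit_chord :: "nat \<Rightarrow> chord" where
  "digit_chord (Suc 0) = R1" | "digit_chord (Suc (Suc 0)) = R2" | "digit_chord _ = R3"

fun extend :: "chord \<Rightarrow> nat \<Rightarrow> chord option" where
  "extend R1 d = (if d = 2 then Some R12 else None)"
| "extend R12 d = (if d = 3 then Some R123 else None)"
| "extend R2 d = (if d = 3 then Some R23 else None)"
| "extend _ d = None"

fun attach :: "chord list \<Rightarrow> nat list \<Rightarrow> chord list" where
  "attach acc [] = acc"
| "attach [] ds = map digit_chord ds"
| "attach acc (d # ds) =
     (case extend (last acc) d of
        Some c \<Rightarrow> butlast acc @ [c] @ map digit_chord ds
      | None \<Rightarrow> acc @ map digit_chord (d # ds))"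

definition cfa_inputs :: "chord list \<Rightarrow> chord list" where
  "cfa_inputs Is = foldl (\<lambda>acc I. attach acc (chord_word I)) [] Is"

text \<open>\<open>mA D x as z\<close>: coefficient of \<open>z\<close> in \<open>m_{k+1}(x, rho_{a_1}, ..., rho_{a_k})\<close>, k >= 1,
  for the CFA obtained from the reduced type D structure with coefficient maps \<open>D\<close>
  (generators in bijection, same idempotents; m_1 = D_empty = 0 and m_2(x,1) = x).\<close>
definition mA :: "'g coeff \<Rightarrow> 'g \<Rightarrow> chord list \<Rightarrow> 'g \<Rightarrow> bool" where
  "mA D x as z \<longleftrightarrow> odd (card {Is. Is \<noteq> [] \<and> cfa_inputs Is = as \<and> comp D Is x z})"

definition grA :: "('g \<Rightarrow> idem) \<Rightarrow> ('g \<Rightarrow> bool) \<Rightarrow> 'g \<Rightarrow> bool" where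
  "grA idm gr x = (if idm x = I0 then \<not> gr x else gr x)"

definition tgen :: "('a \<Rightarrow> idem) \<Rightarrow> ('b \<Rightarrow> idem) \<Rightarrow> ('a \<times> 'b) set" where
  "tgen idm1 idm2 = {(x, y). idm1 x = idm2 y}"

text \<open>Coefficient of \<open>z \<otimes> w\<close> in \<open>\<partial>(x \<otimes> y) = sum_k m_{k+1}(x, a_1..a_k) \<otimes> D_{a_k}...D_{a_1}(y)\<close>.\<close>
definition tdiff :: "('a \<Rightarrow> idem) \<Rightarrow> 'a coeff \<Rightarrow> ('b \<Rightarrow> idem) \<Rightarrow> 'b coeff
                    \<Rightarrow> 'a \<times> 'b \<Rightarrow> 'a \<times> 'b \<Rightarrow> bool" where
  "tdiff idm1 D1 idm2 D2 p q \<longleftrightarrow>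
     p \<in> tgen idm1 idm2 \<and> q \<in> tgen idm1 idm2 \<and>
     odd (card {as. as \<noteq> [] \<and> mA D1 (fst p) as (fst q) \<and> comp D2 as (snd p) (snd q)})"

text \<open>Chains are finite sets of tensor generators (F_2-vectors).\<close>
definition tapply :: "('c \<Rightarrow> 'c \<Rightarrow> bool) \<Rightarrow> 'c set \<Rightarrow> 'c set" where
  "tapply M S = {q. odd (card {p \<in> S. M p q})}"

definition tgr :: "('a \<Rightarrow> idem) \<Rightarrow> ('a \<Rightarrow> bool) \<Rightarrow> ('b \<Rightarrow> bool) \<Rightarrow> 'a \<times> 'b \<Rightarrow> bool" where
  "tgr idm1 gr1 gr2 p = (grA idm1 gr1 (fst p) \<noteq> gr2 (snd p))"

text \<open>The homology of the box tensor product has nonzero classes in both Z/2 gradings,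
  i.e. it is not supported in a single relative Z/2 grading (so the glued manifold is
  not an L-space).\<close>
definition homology_in_both_gradings ::
  "('a::finite \<Rightarrow> idem) \<Rightarrow> 'a coeff \<Rightarrow> ('a \<Rightarrow> bool) \<Rightarrow>
   ('b::finite \<Rightarrow> idem) \<Rightarrow> 'b coeff \<Rightarrow> ('b \<Rightarrow> bool) \<Rightarrow> bool" where
  "homology_in_both_gradings idm1 D1 gr1 idm2 D2 gr2 \<longleftrightarrow>
    (\<exists>S0 S1. S0 \<subseteq> tgen idm1 idm2 \<and> S1 \<subseteq> tgen idm1 idm2
      \<and> tapply (tdiff idm1 D1 idm2 D2) S0 = {} \<and> tapply (tdiff idm1 D1 idm2 D2) S1 = {}
      \<and> (\<forall>T \<subseteq> tgen idm1 idm2. tapply (tdiff idm1 D1 idm2 D2) T \<noteq> S0)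
      \<and> (\<forall>T \<subseteq> tgen idm1 idm2. tapply (tdiff idm1 D1 idm2 D2) T \<noteq> S1)
      \<and> (\<forall>p\<in>S0. tgr idm1 gr1 gr2 p = False)
      \<and> (\<forall>p\<in>S1. tgr idm1 gr1 gr2 p = True))"

end

theory Submission
  imports Defs
begin

(* Write M for the differential of CFA(Y1) \<boxtimes> CFD(Y2).  We show that the two
   tensor generators x1\<otimes>x2 and y1\<otimes>y2 are isolated: M neither leaves nor enters them.
   Hence each spans a homology class that is nonzero (it is a cycle, and no chain bounds
   it), and since D_123(x1) = y1 and D_123(x2) = y2, the two generators lie in opposite
   relative Z/2 gradings. *)

lemma comp_single: "comp D [I] x z = D (Some I) x z"
proof -
  have "{u. D (Some I) x u \<and> u = z} = (if D (Some I) x z then {z} else {})" by auto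
  then show ?thesis by simp
qed

lemma odd_card_pairs:
  fixes P :: "'u::finite \<Rightarrow> bool" and Q :: "'u \<Rightarrow> 'w::finite \<Rightarrow> bool"
  shows "odd (card {(u, w). P u \<and> Q u w}) \<longleftrightarrow> odd (card {u. P u \<and> odd (card {w. Q u w})})"
proof -
  have "{(u, w). P u \<and> Q u w} = Sigma {u. P u} (\<lambda>u. {w. Q u w})" by auto
  then have "card {(u, w). P u \<and> Q u w} = (\<Sum>u\<in>{u. P u}. card {w. Q u w})"
    by (simp add: card_SigmaI)
  then show ?thesis by (simp add: even_sum_iff)
qed

lemma comp_append:
  fixes D :: "'g::finite coeff"
  shows "comp D (Is @ Js) x z \<longleftrightarrow> odd (card {w. comp D Is x w \<and> comp D Js w z})"
proof (induction Is arbitrary: x)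
  case Nil
  have "{w. x = w \<and> comp D Js w z} = (if comp D Js x z then {x} else {})" by auto
  then show ?case by simp
next
  case (Cons I Is)
  have "comp D ((I # Is) @ Js) x z
      \<longleftrightarrow> odd (card {u. D (Some I) x u \<and> odd (card {w. comp D Is u w \<and> comp D Js w z})})"
    using Cons by simp
  also have "\<dots> \<longleftrightarrow> odd (card {(u, w). D (Some I) x u \<and> (comp D Is u w \<and> comp D Js w z)})"
    by (rule odd_card_pairs[symmetric])
  also have "card {(u, w). D (Some I) x u \<and> (comp D Is u w \<and> comp D Js w z)}
           = card {(w, u). comp D Js w z \<and> (D (Some I) x u \<and> comp D Is u w)}"
  proof -
    have "{(w, u). comp D Js w z \<and> (D (Some I) x u \<and> comp D Is u w)}
        = prod.swap ` {(u, w). D (Some I) x u \<and> (comp D Is u w \<and> comp D Js w z)}"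
      by auto
    then show ?thesis by (simp add: card_image)
  qed
  also have "odd \<dots> \<longleftrightarrow> odd (card {w. comp D Js w z \<and> odd (card {u. D (Some I) x u \<and> comp D Is u w})})"
    by (rule odd_card_pairs)
  also have "\<dots> \<longleftrightarrow> odd (card {w. comp D (I # Is) x w \<and> comp D Js w z})"
    by (simp add: conj_commute)
  finally show ?case .
qed

lemma comp_prefix_vanishes:
  fixes D :: "'g::finite coeff"
  assumes "\<And>w. \<not> comp D Is x w"
  shows "\<not> comp D (Is @ Js) x z"
  using assms by (simp add: comp_append)

lemma comp_into_unhit:
  fixes D :: "'g::finite coeff"
  assumes unhit: "\<And>I w. \<not> D I w x" and "Is \<noteq> []"
  shows "\<not> comp D Is w x"
proof -
  obtain As I where Is: "Is = As @ [I]" using \<open>Is \<noteq> []\<close> by (cases Is rule: rev_cases) auto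
  have "\<not> comp D [I] u x" for u using unhit comp_single by metis
  then have no_path: "{u. comp D As w u \<and> comp D [I] u x} = {}" by blast
  show ?thesis unfolding Is comp_append no_path by simp
qed

lemma attach_keeps_butlast:
  assumes "acc \<noteq> []"
  shows "\<exists>s. s \<noteq> [] \<and> attach acc ds = butlast acc @ s"
proof (cases ds)
  case Nil
  then show ?thesis by (intro exI[of _ "[last acc]"]) (simp add: assms)
next
  case (Cons d ds')
  obtain a as where acc: "acc = a # as" using assms by (cases acc) auto
  show ?thesis
  proof (cases "extend (last acc) d")
    case None
    then show ?thesis using assms Cons acc
      by (intro exI[of _ "[last acc] @ map digit_chord (d # ds')"]) (simp add: append_butlast_last_id)
  next
    case (Some c)
    then show ?thesis using assms Cons acc
      by (intro exI[of _ "[c] @ map digit_chord ds'"]) simp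
  qed
qed

lemma foldl_attach_keeps_butlast:
  "\<exists>r. foldl (\<lambda>acc I. attach acc (chord_word I)) acc Js = butlast acc @ r"
proof (induction Js arbitrary: acc)
  case Nil
  show ?case by (simp, metis append_take_drop_id butlast_conv_take)
next
  case (Cons J Js)
  show ?case
  proof (cases "acc = []")
    case True
    then show ?thesis by simp
  next
    case False
    then obtain s where s: "s \<noteq> []" "attach acc (chord_word J) = butlast acc @ s"
      using attach_keeps_butlast by blast
    obtain r where "foldl (\<lambda>acc I. attach acc (chord_word I)) (attach acc (chord_word J)) Js
                    = butlast (attach acc (chord_word J)) @ r"
      using Cons.IH by blast
    with s show ?thesis by (intro exI[of _ "butlast s @ r"]) (simp add: butlast_append)
  qed
qed

(* The input word of a chain Is @ Js begins with the word of Is, except possibly its last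
   chord, which may still merge with the next digit. *)
lemma cfa_inputs_append: "\<exists>r. cfa_inputs (Is @ Js) = butlast (cfa_inputs Is) @ r"
  unfolding cfa_inputs_def foldl_append by (rule foldl_attach_keeps_butlast)

lemma mA_chain:
  assumes "mA D x as z"
  obtains Is where "Is \<noteq> []" "cfa_inputs Is = as" "comp D Is x z"
proof -
  have "{Is. Is \<noteq> [] \<and> cfa_inputs Is = as \<and> comp D Is x z} \<noteq> {}"
    using assms unfolding mA_def by (metis card.empty odd_pos less_irrefl)
  then show ?thesis using that by blast
qed

(* Words of composites that weak durability kills on a generator in idempotent iota_0. *)
definition killed_at_I0 :: "chord list set" where
  "killed_at_I0 = {[R1], [R12], [R123, R2], [R3, R2, R1], [R3, R2, R12]}"

lemma weakly_durable_I0_kills: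
  fixes D :: "'g::finite coeff"
  assumes "weakly_durable idm D x" "idm x = I0" "p \<in> killed_at_I0"
  shows "\<not> comp D (p @ r) x z"
proof -
  have "\<not> comp D p x w" for w
    using assms unfolding weakly_durable_def killed_at_I0_def by (auto simp: comp_single)
  then show ?thesis by (rule comp_prefix_vanishes)
qed

lemma durable_I0_chains:
  assumes "durable idm D x" "idm x = I0" "comp D Is x z" "Is \<noteq> []"
  shows "Is = [R3] \<or> Is = [R3, R2] \<or> Is = [R123] \<or> (\<exists>Ks. Is = [R3, R23] @ Ks)
       \<or> (\<exists>Ks. Is = [R3, R2, R123] @ Ks) \<or> (\<exists>Ks. Is = [R123, R23] @ Ks)"
proof -
  have dur: "Is ! 0 \<in> {R3, R123}"
      "Is ! 0 = R123 \<and> length Is > 1 \<longrightarrow> Is ! 1 = R23"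
      "Is ! 0 = R3 \<and> length Is > 1 \<longrightarrow> Is ! 1 \<in> {R23, R2}"
      "Is ! 1 = R2 \<and> length Is > 2 \<longrightarrow> Is ! 2 = R123"
    using assms unfolding durable_def by auto
  obtain I Js where Is: "Is = I # Js" using \<open>Is \<noteq> []\<close> by (cases Is) auto
  show ?thesis
  proof (cases Js)
    case Nil
    then show ?thesis using dur Is by auto
  next
    case (Cons J Ks)
    show ?thesis
    proof (cases Ks)
      case Nil
      then show ?thesis using dur Is Cons by auto
    next
      case (Cons K Ls)
      then show ?thesis using dur Is \<open>Js = J # Ks\<close> by auto
    qed
  qed
qed

lemma durable_I0_words:
  assumes "durable idm D x" "idm x = I0" "comp D Is x z" "Is \<noteq> []"
  shows "\<exists>p \<in> killed_at_I0. \<exists>r. cfa_inputs Is = p @ r"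
proof -
  have exact: "\<exists>p \<in> killed_at_I0. \<exists>r. cfa_inputs Is = p @ r"
    if "cfa_inputs Is \<in> killed_at_I0"
    using that by (metis append_Nil2)
  have prefix: "\<exists>p \<in> killed_at_I0. \<exists>r. cfa_inputs Is = p @ r"
    if "Is = P @ Ks" "butlast (cfa_inputs P) \<in> killed_at_I0" for P Ks
    using that cfa_inputs_append by blast
  have words: "cfa_inputs [R3] = [R1]" "cfa_inputs [R3, R2] = [R12]"
      "cfa_inputs [R123] = [R3, R2, R1]" "cfa_inputs [R3, R23] = [R12, R1]"
      "cfa_inputs [R3, R2, R123] = [R123, R2, R1]" "cfa_inputs [R123, R23] = [R3, R2, R12, R1]"
    by (simp_all add: cfa_inputs_def eval_nat_numeral)
  from durable_I0_chains[OF assms] consider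
      "Is = [R3]" | "Is = [R3, R2]" | "Is = [R123]"
    | Ks where "Is = [R3, R23] @ Ks" | Ks where "Is = [R3, R2, R123] @ Ks"
    | Ks where "Is = [R123, R23] @ Ks"
    by blast
  then show ?thesis
  proof cases
    case 1 then show ?thesis by (intro exact) (simp add: words killed_at_I0_def)
  next
    case 2 then show ?thesis by (intro exact) (simp add: words killed_at_I0_def)
  next
    case 3 then show ?thesis by (intro exact) (simp add: words killed_at_I0_def)
  next
    case 4 then show ?thesis by (rule prefix) (simp add: words killed_at_I0_def)
  next
    case 5 then show ?thesis by (rule prefix) (simp add: words killed_at_I0_def)
  next
    case 6 then show ?thesis by (rule prefix) (simp add: words killed_at_I0_def)
  qed
qed

lemma durable_I1_words_out:
  assumes "durable idm D y" "idm y = I1" "comp D Is y z" "Is \<noteq> []"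
  shows "\<exists>r. cfa_inputs Is = [R2] @ r"
proof -
  have "Is ! 0 = R23" using assms unfolding durable_def by auto
  then obtain Ks where "Is = [R23] @ Ks" using \<open>Is \<noteq> []\<close> by (cases Is) auto
  moreover have "butlast (cfa_inputs [R23]) = [R2]"
    by (simp add: cfa_inputs_def eval_nat_numeral)
  ultimately show ?thesis using cfa_inputs_append by metis
qed

lemma durable_I1_words_in:
  assumes "durable idm D y" "idm y = I1" "comp D Is w y" "Is \<noteq> []"
  shows "cfa_inputs Is = [R3] \<or> cfa_inputs Is = [R3, R2, R1]"
proof -
  have "length Is = 1" "Is ! 0 \<in> {R1, R123}"
    using assms unfolding durable_def by auto
  then have "Is = [R1] \<or> Is = [R123]" by (cases Is) auto
  then show ?thesis by (auto simp: cfa_inputs_def eval_nat_numeral)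
qed

lemma tdiff_vanishes:
  assumes "\<And>Is. Is \<noteq> [] \<Longrightarrow> comp D1 Is (fst p) (fst q) \<Longrightarrow> \<not> comp D2 (cfa_inputs Is) (snd p) (snd q)"
  shows "\<not> tdiff idm1 D1 idm2 D2 p q"
proof -
  have no_word: "{as. as \<noteq> [] \<and> mA D1 (fst p) as (fst q) \<and> comp D2 as (snd p) (snd q)} = {}"
    using assms by (auto elim: mA_chain)
  show ?thesis unfolding tdiff_def no_word by simp
qed

lemma isolated_generator_homology:
  assumes "\<And>q. \<not> M p q" "\<And>r. \<not> M r p"
  shows "tapply M {p} = {}" "tapply M T \<noteq> {p}"
proof -
  have no_out: "{r \<in> {p}. M r q} = {}" for q using assms(1) by auto
  show "tapply M {p} = {}" unfolding tapply_def no_out by simp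
  have no_in: "{r \<in> T. M r p} = {}" using assms(2) by auto
  have "p \<notin> tapply M T" unfolding tapply_def mem_Collect_eq no_in by simp
  then show "tapply M T \<noteq> {p}" by auto
qed

lemma homology_in_both_gradings_from_isolated:
  fixes idm1 :: "'a::finite \<Rightarrow> idem" and D1 :: "'a coeff"
    and idm2 :: "'b::finite \<Rightarrow> idem" and D2 :: "'b coeff"
  defines "M \<equiv> tdiff idm1 D1 idm2 D2"
  assumes gens: "p \<in> tgen idm1 idm2" "q \<in> tgen idm1 idm2"
    and isolated: "\<And>u. \<not> M p u" "\<And>u. \<not> M u p" "\<And>u. \<not> M q u" "\<And>u. \<not> M u q"
    and opposite: "tgr idm1 gr1 gr2 p \<noteq> tgr idm1 gr1 gr2 q"
  shows "homology_in_both_gradings idm1 D1 gr1 idm2 D2 gr2"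
proof -
  note hp = isolated_generator_homology[of M p, OF isolated(1,2)]
  note hq = isolated_generator_homology[of M q, OF isolated(3,4)]
  show ?thesis
  proof (cases "tgr idm1 gr1 gr2 p")
    case True
    then show ?thesis unfolding homology_in_both_gradings_def
      using gens hp hq opposite unfolding M_def
      by (intro exI[of _ "{q}"] exI[of _ "{p}"]) auto
  next
    case False
    then show ?thesis unfolding homology_in_both_gradings_def
      using gens hp hq opposite unfolding M_def
      by (intro exI[of _ "{p}"] exI[of _ "{q}"]) auto
  qed
qed

theorem proposition3p3:
  fixes idm1 :: "'a::finite \<Rightarrow> idem" and D1 :: "'a coeff" and gr1 :: "'a \<Rightarrow> bool"
    and idm2 :: "'b::finite \<Rightarrow> idem" and D2 :: "'b coeff" and gr2 :: "'b \<Rightarrow> bool"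
    and x1 y1 :: 'a and x2 y2 :: 'b
  assumes N1: "typeD idm1 D1" "graded D1 gr1" "reduced D1"
    and N2: "typeD idm2 D2" "graded D2 gr2" "reduced D2"
    and bdd: "boundedD D1 \<or> boundedD D2"
    and x1: "durable idm1 D1 x1" and y1: "durable idm1 D1 y1"
    and y1_def: "\<forall>z. D1 (Some R123) x1 z \<longleftrightarrow> z = y1"
    and x2: "weakly_durable idm2 D2 x2" and y2: "weakly_durable idm2 D2 y2"
    and y2_def: "\<forall>z. D2 (Some R123) x2 z \<longleftrightarrow> z = y2"
  shows "homology_in_both_gradings idm1 D1 gr1 idm2 D2 gr2"
proof -
  have d1: "D1 (Some R123) x1 y1" and d2: "D2 (Some R123) x2 y2"
    using y1_def y2_def by simp_all
  \<comment> \<open>D_123 runs from iota_0 to iota_1 and preserves the grading.\<close>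
  have idm: "idm1 x1 = I0" "idm1 y1 = I1" "idm2 x2 = I0" "idm2 y2 = I1"
    using d1 d2 N1(1) N2(1) unfolding typeD_def by fastforce+
  have gr: "gr1 y1 = gr1 x1" "gr2 y2 = gr2 x2"
    using d1 d2 N1(2) N2(2) unfolding graded_def by fastforce+
  let ?M = "tdiff idm1 D1 idm2 D2"
  \<comment> \<open>x1\<otimes>x2 is isolated: its outgoing words are killed at x2, and nothing enters x1.\<close>
  have "\<not> ?M (x1, x2) q" for q
    using durable_I0_words[OF x1 idm(1)] weakly_durable_I0_kills[OF x2 idm(3)]
    by (intro tdiff_vanishes) fastforce
  moreover have "\<not> ?M p (x1, x2)" for p
    using comp_into_unhit[of D1 x1] x1 idm(1) unfolding durable_def
    by (intro tdiff_vanishes) simp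
  \<comment> \<open>y1\<otimes>y2 is isolated: the words leaving or entering y1 are killed at y2.\<close>
  moreover have "\<not> ?M (y1, y2) q" for q
    using durable_I1_words_out[OF y1 idm(2)] comp_prefix_vanishes[of D2 "[R2]" y2]
      y2 idm(4) unfolding weakly_durable_def
    by (intro tdiff_vanishes) (fastforce simp: comp_single)
  moreover have "\<not> ?M p (y1, y2)" for p
    using durable_I1_words_in[OF y1 idm(2)] y2 idm(4) unfolding weakly_durable_def
    by (intro tdiff_vanishes) fastforce
  moreover have "(x1, x2) \<in> tgen idm1 idm2" "(y1, y2) \<in> tgen idm1 idm2"
    using idm unfolding tgen_def by simp_all
  moreover have "tgr idm1 gr1 gr2 (x1, x2) \<noteq> tgr idm1 gr1 gr2 (y1, y2)"
    using idm gr unfolding tgr_def grA_def by simp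
  ultimately show ?thesis by (intro homology_in_both_gradings_from_isolated) blast+
qed

end
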